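(* Let $a=(a_n)_{n\ge1}$ be a real sequence with $\sum_{n=1}^\infty|a_n|<\infty$, and define $$(\tilde{\Gamma}a)_n=\frac{1}{n}\sum_{k=1}^n a_k-\frac{1}{n+1}\sum_{k=1}^\infty a_k,\qquad n\ge1.$$ If $\sum_{k=1}^\infty |a_k|\ln(k+1)<\infty$, then $\sum_{n=1}^\infty|(\tilde{\Gamma}a)_n|<\infty$. Conversely, if $a_n>0$ for all $n$ and $\sum_{n=1}^\infty|(\tilde{\Gamma}a)_n|<\infty$, then $\sum_{k=1}^\infty a_k\ln(k+1)<\infty$. *)

theory Defs
  imports "HOL-Analysis.Analysis"
begin

text \<open>Sequences a = (a_n)_{n>=1} are modelled as functions nat => real whose value at 0 is ignored.
  The infinite sum over k>=1 is written as suminf of (\<lambda>k. a (Suc k)).\<close>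

definition gamma_tilde :: "(nat \<Rightarrow> real) \<Rightarrow> nat \<Rightarrow> real" where
  "gamma_tilde a n = (1 / real n) * (\<Sum>k=1..n. a k)
                     - (1 / (real n + 1)) * (\<Sum>k. a (Suc k))"

end

theory Submission
  imports Defs
begin

text \<open>Writing \<open>A\<^sub>n\<close> for the partial sums and \<open>R\<^sub>n = \<Sum>\<^sub>k\<^sub>>\<^sub>n a\<^sub>k\<close> for the remainders,
  \<open>(\<Gamma>a)\<^sub>n = A\<^sub>n / (n (n + 1)) - R\<^sub>n / (n + 1)\<close>. The first term is absolutely summable
  because \<open>A\<^sub>n\<close> is bounded, so everything hinges on \<open>\<Sum>\<^sub>n R\<^sub>n / (n + 1)\<close>. For nonnegative
  terms, exchanging the order of summation turns this into \<open>\<Sum>\<^sub>k a\<^sub>k (H\<^sub>k - 1)\<close>, and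
  \<open>H\<^sub>k - 1 \<le> ln (k + 1) \<le> H\<^sub>k\<close>. For general \<open>a\<close> one bounds \<open>|R\<^sub>n|\<close> by the remainders
  of \<open>|a|\<close>; for positive \<open>a\<close> the remainders are nonnegative, so the argument reverses.\<close>

definition remainder :: "(nat \<Rightarrow> real) \<Rightarrow> nat \<Rightarrow> real" where
  "remainder b n = (\<Sum>k. b (k + Suc n))"

lemma suminf_eq_partial_sum_plus_remainder:
  assumes "summable (\<lambda>k. b (Suc k))"
  shows "(\<Sum>k. b (Suc k)) = (\<Sum>k=1..n. b k) + remainder b n"
  using suminf_split_initial_segment[OF assms, of n]
  by (simp add: remainder_def sum_bounds_lt_plus1)

lemma remainder_nonneg:
  assumes "summable (\<lambda>k. b (Suc k))" and "\<forall>k\<ge>1. 0 \<le> b k"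
  shows "0 \<le> remainder b n"
  unfolding remainder_def using assms summable_ignore_initial_segment[OF assms(1), of n]
  by (intro suminf_nonneg) auto

lemma abs_remainder_le:
  assumes "summable (\<lambda>k. \<bar>b (Suc k)\<bar>)"
  shows "\<bar>remainder b n\<bar> \<le> remainder (\<lambda>k. \<bar>b k\<bar>) n"
  unfolding remainder_def using summable_ignore_initial_segment[OF assms, of n]
  by (intro summable_rabs) simp

lemma partial_sum_diff_le_remainder:
  assumes summ: "summable (\<lambda>k. b (Suc k))" and nonneg: "\<forall>k\<ge>1. 0 \<le> b k"
  shows "(\<Sum>k=1..M. b k) - (\<Sum>k=1..n. b k) \<le> remainder b n"
proof -
  have "(\<Sum>k=1..M. b k) \<le> (\<Sum>k. b (Suc k))"
    using sum_le_suminf[OF summ, of "{..<M}"] nonneg by (simp add: sum_bounds_lt_plus1)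
  then show ?thesis
    using suminf_eq_partial_sum_plus_remainder[OF summ, of n] by simp
qed

lemma partial_sum_diff_tendsto_remainder:
  assumes summ: "summable (\<lambda>k. b (Suc k))"
  shows "(\<lambda>M. (\<Sum>k=1..M. b k) - (\<Sum>k=1..n. b k)) \<longlonglongrightarrow> remainder b n"
proof -
  have "(\<lambda>M. \<Sum>k=1..M. b k) \<longlonglongrightarrow> (\<Sum>k. b (Suc k))"
    using summable_LIMSEQ[OF summ] by (simp add: sum_bounds_lt_plus1)
  then show ?thesis
    using suminf_eq_partial_sum_plus_remainder[OF summ, of n] by (auto intro: tendsto_eq_intros)
qed

lemma harm_le_ln_plus_one:
  assumes "n \<ge> 1"
  shows "harm n \<le> ln (real n) + 1"
  using euler_mascheroni_sequence_decreasing[of 1 n] assms by (simp add: harm_def)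

lemma one_le_harm:
  assumes "n \<ge> 1"
  shows "1 \<le> (harm n :: real)"
  using harm_mono[OF assms] by (simp add: harm_def)

lemma harm_minus_one_eq_sum:
  "harm (Suc m) - 1 = (\<Sum>n=1..m. 1 / (real n + 1))"
  by (induction m) (simp add: harm_def, simp add: harm_Suc inverse_eq_divide)

lemma sum_partial_sum_diffs_div_eq:
  "(\<Sum>n=1..M. ((\<Sum>k=1..M. b k) - (\<Sum>k=1..n. b k)) / (real n + 1))
     = (\<Sum>k=1..M. b k * (harm k - 1))"
proof (induction M)
  case 0
  then show ?case by simp
next
  case (Suc M)
  have "(\<Sum>n=1..Suc M. ((\<Sum>k=1..Suc M. b k) - (\<Sum>k=1..n. b k)) / (real n + 1))
      = (\<Sum>n=1..M. ((\<Sum>k=1..M. b k) - (\<Sum>k=1..n. b k)) / (real n + 1) + b (Suc M) * (1 / (real n + 1)))"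
    by (simp add: add_divide_distrib diff_divide_distrib algebra_simps)
  also have "\<dots> = (\<Sum>k=1..Suc M. b k * (harm k - 1))"
    using Suc by (simp add: sum.distrib sum_distrib_left harm_minus_one_eq_sum)
  finally show ?case .
qed

lemma summable_Suc_iff_bounded_sums:
  fixes f :: "nat \<Rightarrow> real"
  assumes "\<forall>n\<ge>1. 0 \<le> f n"
  shows "summable (\<lambda>n. f (Suc n)) \<longleftrightarrow> (\<exists>C. \<forall>N. (\<Sum>n=1..N. f n) \<le> C)"
proof
  assume "summable (\<lambda>n. f (Suc n))"
  then have "(\<Sum>n=1..N. f n) \<le> (\<Sum>n. f (Suc n))" for N
    using sum_le_suminf[of "\<lambda>n. f (Suc n)" "{..<N}"] assms by (simp add: sum_bounds_lt_plus1)
  then show "\<exists>C. \<forall>N. (\<Sum>n=1..N. f n) \<le> C" by blast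
next
  assume "\<exists>C. \<forall>N. (\<Sum>n=1..N. f n) \<le> C"
  then obtain C where "\<And>N. (\<Sum>n=1..N. f n) \<le> C" by blast
  then have "(\<Sum>n\<le>N. f (Suc n)) \<le> C" for N
    by (metis lessThan_Suc_atMost sum_bounds_lt_plus1)
  with assms show "summable (\<lambda>n. f (Suc n))"
    by (intro bounded_imp_summable) auto
qed

lemma summable_remainders_div_iff:
  assumes summ: "summable (\<lambda>k. b (Suc k))" and nonneg: "\<forall>k\<ge>1. 0 \<le> b k"
  shows "summable (\<lambda>n. remainder b (Suc n) / (real (Suc n) + 1))
    \<longleftrightarrow> summable (\<lambda>k. b (Suc k) * (harm (Suc k) - 1))"
proof -
  define d where "d M n = ((\<Sum>k=1..M. b k) - (\<Sum>k=1..n. b k)) / (real n + 1)" for M n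
  have harm_weights_nonneg: "\<forall>k\<ge>1. 0 \<le> b k * (harm k - 1)"
    using nonneg one_le_harm by simp
  have remainders_nonneg: "\<forall>n\<ge>1. 0 \<le> remainder b n / (real n + 1)"
    using remainder_nonneg[OF summ nonneg] by simp
  have harm_sums_le: "(\<Sum>k=1..M. b k * (harm k - 1)) \<le> (\<Sum>n=1..M. remainder b n / (real n + 1))" for M
    unfolding sum_partial_sum_diffs_div_eq[symmetric]
    by (intro sum_mono divide_right_mono partial_sum_diff_le_remainder summ nonneg) auto
  have remainder_sums_le: "(\<Sum>n=1..N. remainder b n / (real n + 1)) \<le> C"
    if bound: "\<forall>M. (\<Sum>k=1..M. b k * (harm k - 1)) \<le> C" for N C
  proof (rule LIMSEQ_le_const2)
    show "(\<lambda>M. \<Sum>n=1..N. d M n) \<longlonglongrightarrow> (\<Sum>n=1..N. remainder b n / (real n + 1))"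
      unfolding d_def by (intro tendsto_intros partial_sum_diff_tendsto_remainder summ) auto
    have "(\<Sum>n=1..N. d M n) \<le> C" if "N \<le> M" for M
    proof -
      have "(\<Sum>n=1..N. d M n) \<le> (\<Sum>n=1..M. d M n)"
        unfolding d_def using that nonneg
        by (intro sum_mono2 divide_nonneg_pos) (auto intro!: sum_mono2)
      also have "\<dots> \<le> C"
        using bound unfolding d_def sum_partial_sum_diffs_div_eq by blast
      finally show ?thesis .
    qed
    then show "\<exists>N'. \<forall>M\<ge>N'. (\<Sum>n=1..N. d M n) \<le> C" by blast
  qed
  show ?thesis
    unfolding summable_Suc_iff_bounded_sums[OF remainders_nonneg]
      summable_Suc_iff_bounded_sums[OF harm_weights_nonneg]
    using harm_sums_le remainder_sums_le order_trans by meson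
qed

lemma summable_mult_ln_iff_harm:
  assumes summ: "summable (\<lambda>k. b (Suc k))" and nonneg: "\<forall>k\<ge>1. 0 \<le> b k"
  shows "summable (\<lambda>k. b (Suc k) * ln (real (Suc k) + 1))
    \<longleftrightarrow> summable (\<lambda>k. b (Suc k) * (harm (Suc k) - 1))"
proof
  assume "summable (\<lambda>k. b (Suc k) * ln (real (Suc k) + 1))"
  then show "summable (\<lambda>k. b (Suc k) * (harm (Suc k) - 1))"
  proof (rule summable_comparison_test')
    fix k
    have "harm (Suc k) - 1 \<le> ln (real (Suc k))"
      using harm_le_ln_plus_one[of "Suc k"] by simp
    also have "\<dots> \<le> ln (real (Suc k) + 1)"
      by simp
    finally have "harm (Suc k) - 1 \<le> ln (real (Suc k) + 1)" .
    moreover have "1 \<le> (harm (Suc k) :: real)"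
      by (simp add: one_le_harm)
    ultimately show "norm (b (Suc k) * (harm (Suc k) - 1)) \<le> b (Suc k) * ln (real (Suc k) + 1)"
      using nonneg by (auto simp: abs_mult intro!: mult_left_mono)
  qed
next
  assume "summable (\<lambda>k. b (Suc k) * (harm (Suc k) - 1))"
  then have "summable (\<lambda>k. b (Suc k) * (harm (Suc k) - 1) + b (Suc k))"
    using summ by (rule summable_add)
  then show "summable (\<lambda>k. b (Suc k) * ln (real (Suc k) + 1))"
  proof (rule summable_comparison_test')
    fix k
    show "norm (b (Suc k) * ln (real (Suc k) + 1)) \<le> b (Suc k) * (harm (Suc k) - 1) + b (Suc k)"
      using nonneg mult_left_mono[OF ln_le_harm[of "Suc k"], of "b (Suc k)"]
      by (simp add: abs_mult algebra_simps)
  qed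
qed

lemma summable_norm_diff_iff:
  fixes u v :: "nat \<Rightarrow> 'a::real_normed_vector"
  assumes u: "summable (\<lambda>n. norm (u n))"
  shows "summable (\<lambda>n. norm (u n - v n)) \<longleftrightarrow> summable (\<lambda>n. norm (v n))"
proof
  assume "summable (\<lambda>n. norm (u n - v n))"
  with u have "summable (\<lambda>n. norm (u n) + norm (u n - v n))"
    by (rule summable_add)
  then show "summable (\<lambda>n. norm (v n))"
    by (rule summable_comparison_test')
      (metis norm_minus_commute norm_triangle_sub real_norm_def abs_norm_cancel)
next
  assume "summable (\<lambda>n. norm (v n))"
  with u have "summable (\<lambda>n. norm (u n) + norm (v n))"
    by (rule summable_add)
  then show "summable (\<lambda>n. norm (u n - v n))"
    by (rule summable_comparison_test') (simp add: norm_triangle_ineq4)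
qed

lemma summable_inverse_mult_Suc: "summable (\<lambda>n. 1 / (real (Suc n) * (real (Suc n) + 1)))"
proof (rule summable_comparison_test')
  show "summable (\<lambda>n. inverse (real (Suc n) ^ 2))"
    using inverse_power_summable[of 2] by (subst summable_Suc_iff) simp
  show "norm (1 / (real (Suc n) * (real (Suc n) + 1))) \<le> inverse (real (Suc n) ^ 2)" for n
    by (simp add: divide_simps power2_eq_square del: of_nat_Suc)
qed

lemma gamma_tilde_Suc_eq:
  assumes "summable (\<lambda>k. a (Suc k))"
  shows "gamma_tilde a (Suc n) = (\<Sum>k=1..Suc n. a k) / (real (Suc n) * (real (Suc n) + 1))
    - remainder a (Suc n) / (real (Suc n) + 1)"
proof -
  have "A / m - (A + R) / (m + 1) = A / (m * (m + 1)) - R / (m + 1)" if "m > 0" for A R m :: real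
  proof -
    have "m \<noteq> 0" "m + 1 \<noteq> 0" using that by auto
    then show ?thesis by (simp add: divide_simps) (simp add: algebra_simps)
  qed
  then show ?thesis
    unfolding gamma_tilde_def suminf_eq_partial_sum_plus_remainder[OF assms, of "Suc n"]
    by (simp del: of_nat_Suc)
qed

lemma summable_abs_gamma_tilde_iff:
  assumes abs_summ: "summable (\<lambda>k. \<bar>a (Suc k)\<bar>)"
  shows "summable (\<lambda>n. \<bar>gamma_tilde a (Suc n)\<bar>)
    \<longleftrightarrow> summable (\<lambda>n. \<bar>remainder a (Suc n)\<bar> / (real (Suc n) + 1))"
proof -
  define u where "u n = (\<Sum>k=1..Suc n. a k) / (real (Suc n) * (real (Suc n) + 1))" for n
  have "summable (\<lambda>n. \<bar>u n\<bar>)"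
  proof (rule summable_comparison_test'[OF summable_mult[OF summable_inverse_mult_Suc]])
    fix n
    have "\<bar>\<Sum>k=1..Suc n. a k\<bar> \<le> (\<Sum>k=1..Suc n. \<bar>a k\<bar>)"
      by (rule sum_abs)
    also have "\<dots> = (\<Sum>k<Suc n. \<bar>a (Suc k)\<bar>)"
      by (rule sum_bounds_lt_plus1[symmetric])
    also have "\<dots> \<le> (\<Sum>k. \<bar>a (Suc k)\<bar>)"
      using abs_summ by (intro sum_le_suminf) auto
    finally show "norm \<bar>u n\<bar> \<le> (\<Sum>k. \<bar>a (Suc k)\<bar>) * (1 / (real (Suc n) * (real (Suc n) + 1)))"
      unfolding u_def by (simp add: divide_right_mono del: of_nat_Suc)
  qed
  moreover have "gamma_tilde a (Suc n) = u n - remainder a (Suc n) / (real (Suc n) + 1)" for n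
    unfolding u_def using gamma_tilde_Suc_eq[OF summable_rabs_cancel[OF abs_summ]] by simp
  ultimately show ?thesis
    using summable_norm_diff_iff[of u "\<lambda>n. remainder a (Suc n) / (real (Suc n) + 1)"]
    by simp
qed

theorem theorem3p4:
  fixes a :: "nat \<Rightarrow> real"
  assumes abs_sum: "summable (\<lambda>k. \<bar>a (Suc k)\<bar>)"
  shows "(summable (\<lambda>k. \<bar>a (Suc k)\<bar> * ln (real (Suc k) + 1))
            \<longrightarrow> summable (\<lambda>n. \<bar>gamma_tilde a (Suc n)\<bar>))
       \<and> ((\<forall>n\<ge>1. a n > 0) \<and> summable (\<lambda>n. \<bar>gamma_tilde a (Suc n)\<bar>)
            \<longrightarrow> summable (\<lambda>k. a (Suc k) * ln (real (Suc k) + 1)))"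
proof (intro conjI impI)
  have abs_nonneg: "\<forall>k\<ge>1. 0 \<le> \<bar>a k\<bar>"
    by simp
  assume "summable (\<lambda>k. \<bar>a (Suc k)\<bar> * ln (real (Suc k) + 1))"
  then have "summable (\<lambda>n. remainder (\<lambda>k. \<bar>a k\<bar>) (Suc n) / (real (Suc n) + 1))"
    using summable_remainders_div_iff[of "\<lambda>k. \<bar>a k\<bar>", OF abs_sum abs_nonneg]
      summable_mult_ln_iff_harm[of "\<lambda>k. \<bar>a k\<bar>", OF abs_sum abs_nonneg]
    by simp
  then have "summable (\<lambda>n. \<bar>remainder a (Suc n)\<bar> / (real (Suc n) + 1))"
    by (rule summable_comparison_test')
      (simp add: divide_right_mono abs_remainder_le[OF abs_sum] del: of_nat_Suc)
  then show "summable (\<lambda>n. \<bar>gamma_tilde a (Suc n)\<bar>)"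
    using summable_abs_gamma_tilde_iff[OF abs_sum] by simp
next
  assume "(\<forall>n\<ge>1. a n > 0) \<and> summable (\<lambda>n. \<bar>gamma_tilde a (Suc n)\<bar>)"
  then have nonneg: "\<forall>k\<ge>1. 0 \<le> a k" and gamma: "summable (\<lambda>n. \<bar>gamma_tilde a (Suc n)\<bar>)"
    by (auto simp: less_imp_le)
  have summ: "summable (\<lambda>k. a (Suc k))"
    using abs_sum by (rule summable_rabs_cancel)
  have "summable (\<lambda>n. \<bar>remainder a (Suc n)\<bar> / (real (Suc n) + 1))"
    using gamma summable_abs_gamma_tilde_iff[OF abs_sum] by simp
  then have "summable (\<lambda>n. remainder a (Suc n) / (real (Suc n) + 1))"
    using remainder_nonneg[OF summ nonneg] by simp
  then show "summable (\<lambda>k. a (Suc k) * ln (real (Suc k) + 1))"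
    using summable_remainders_div_iff[OF summ nonneg] summable_mult_ln_iff_harm[OF summ nonneg]
    by simp
qed

end
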